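(* Let $\mathbb{A}$ be a medial algebra over a field of characteristic not $2,3$ and let $c$ be a nonzero idempotent with $\ker L_c=0$. Then the function $\phi(x)=\dfrac{\det L_x}{\det L_c}$ satisfies $\phi(xy)=\phi(x)\phi(y)$ for all $x,y\in\mathbb{A}$.
   Context: All algebras are commutative, possibly nonassociative, finite-dimensional. Medial: $(xy)(zw)=(xz)(yw)$ identically. $L_x:y\mapsto xy$. *)

theory Defs
  imports "HOL-Analysis.Analysis"
begin

text \<open>A finite-dimensional algebra over a field 'a is modelled on the coordinate space
  'a^'n (any finite-dimensional vector space is isomorphic to one of these) with a
  multiplication m.\<close>

definition comm_algebra :: "('a::field^'n \<Rightarrow> 'a^'n \<Rightarrow> 'a^'n) \<Rightarrow> bool" where
  "comm_algebra m \<longleftrightarrow>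
     (\<forall>x y. m x y = m y x) \<and>
     (\<forall>x y z. m (x + y) z = m x z + m y z) \<and>
     (\<forall>c x y. m (c *s x) y = c *s m x y)"

definition medial :: "('a^'n \<Rightarrow> 'a^'n \<Rightarrow> 'a^'n) \<Rightarrow> bool" where
  "medial m \<longleftrightarrow> (\<forall>x y z w. m (m x y) (m z w) = m (m x z) (m y w))"

definition Lop :: "('a^'n \<Rightarrow> 'a^'n \<Rightarrow> 'a^'n) \<Rightarrow> 'a^'n \<Rightarrow> 'a^'n \<Rightarrow> 'a^'n" where
  "Lop m x = (\<lambda>y. m x y)"

definition detL :: "('a::field^'n \<Rightarrow> 'a^'n \<Rightarrow> 'a^'n) \<Rightarrow> 'a^'n \<Rightarrow> 'a" where
  "detL m x = det (matrix (Lop m x))"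

end

theory Submission
  imports Defs
begin

text \<open>Mediality gives the operator identities \<open>L\<^sub>x\<^sub>y L\<^sub>c = L\<^sub>x\<^sub>c L\<^sub>y\<close> and, as \<open>c\<close> is
  idempotent, \<open>L\<^sub>c L\<^sub>x = L\<^sub>c\<^sub>x L\<^sub>c\<close>. Taking determinants and cancelling \<open>det L\<^sub>c\<close>, which is
  nonzero because \<open>L\<^sub>c\<close> is injective, yields \<open>det L\<^sub>x\<^sub>y det L\<^sub>c = det L\<^sub>x det L\<^sub>y\<close>.\<close>

lemma linear_Lop:
  assumes "comm_algebra m"
  shows "Vector_Spaces.linear (*s) (*s) (Lop m x)"
proof -
  have "\<And>x y. m x y = m y x" "\<And>x y z. m (x + y) z = m x z + m y z"
    "\<And>c x y. m (c *s x) y = c *s m x y"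
    using assms unfolding comm_algebra_def by auto
  then show ?thesis
    unfolding Vector_Spaces.linear_iff Lop_def using vec.vector_space_axioms by metis
qed

lemma detL_nonzero:
  assumes "comm_algebra m" and "\<forall>x. m c x = 0 \<longrightarrow> x = 0"
  shows "detL m c \<noteq> 0"
proof -
  have lin: "Vector_Spaces.linear (*s) (*s) (Lop m c)"
    using assms(1) by (rule linear_Lop)
  have "inj (Lop m c)"
    unfolding vec.linear_inj_iff_eq_0[OF lin] using assms(2) by (simp add: Lop_def)
  then show ?thesis
    unfolding detL_def using det_nz_iff_inj_gen[OF lin] by blast
qed

lemma detL_mult_eq_of_Lop_comp_eq:
  assumes "comm_algebra m" and "\<And>w. m a (m b w) = m c (m d w)"
  shows "detL m a * detL m b = detL m c * detL m d"
proof -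
  have "Lop m a \<circ> Lop m b = Lop m c \<circ> Lop m d"
    using assms(2) by (auto simp: Lop_def)
  then have "matrix (Lop m a) ** matrix (Lop m b) = matrix (Lop m c) ** matrix (Lop m d)"
    by (metis matrix_compose_gen linear_Lop assms(1))
  then show ?thesis
    unfolding detL_def by (metis det_mul)
qed

lemma medial_detL_mult_mult:
  assumes "comm_algebra m" and "medial m"
  shows "detL m (m x y) * detL m c = detL m (m x c) * detL m y"
  using assms by (intro detL_mult_eq_of_Lop_comp_eq) (simp_all add: medial_def)

lemma medial_detL_mult_idempotent:
  assumes "comm_algebra m" and "medial m" and "m c c = c" and "detL m c \<noteq> 0"
  shows "detL m (m c x) = detL m x"
proof -
  have "detL m c * detL m x = detL m (m c x) * detL m c"
    using assms(1) proof (rule detL_mult_eq_of_Lop_comp_eq)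
    show "m c (m x w) = m (m c x) (m c w)" for w
      using assms(2,3) unfolding medial_def by metis
  qed
  then show ?thesis
    using assms(4) by simp
qed

lemma medial_detL_mult:
  assumes "comm_algebra m" and "medial m" and "m c c = c" and "detL m c \<noteq> 0"
  shows "detL m (m x y) * detL m c = detL m x * detL m y"
proof -
  have "m x c = m c x"
    using assms(1) by (simp add: comm_algebra_def)
  then show ?thesis
    using medial_detL_mult_mult[OF assms(1,2)] medial_detL_mult_idempotent[OF assms] by metis
qed

theorem theorem3p10:
  fixes m :: "'a::field^'n \<Rightarrow> 'a^'n \<Rightarrow> 'a^'n" and c :: "'a^'n"
  assumes "comm_algebra m" and "medial m"
    and "(2::'a) \<noteq> 0" and "(3::'a) \<noteq> 0"
    and "c \<noteq> 0" and "m c c = c"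
    and "\<forall>x. m c x = 0 \<longrightarrow> x = 0"
  shows "\<forall>x y. detL m (m x y) / detL m c = (detL m x / detL m c) * (detL m y / detL m c)"
proof (intro allI)
  fix x y
  have nz: "detL m c \<noteq> 0"
    using assms(1,7) by (rule detL_nonzero)
  have "detL m (m x y) * detL m c = detL m x * detL m y"
    using assms(1,2,6) nz by (rule medial_detL_mult)
  with nz show "detL m (m x y) / detL m c = (detL m x / detL m c) * (detL m y / detL m c)"
    by (simp add: field_simps)
qed

end
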